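(* Let $\mathcal P$ and $\mathrm{conv}(\mathcal P)$ be as in the context. Let $\eta$ be a real number with $0\le\eta\le\min\{L-1,(\overline C-\overline V)/V\}$ and let $\alpha,\beta,s_{\max}$ be integers such that (a) $L\le s_{\max}\le\min\{T-3,\lfloor(\overline C-\overline V)/V\rfloor\}$, (b) $0\le\alpha<\beta\le s_{\max}$, and (c) $\beta=\alpha+1$ or $s_{\max}\le L+\alpha$. Let $\mathcal S=[0,\alpha]_{\mathbb Z}\cup[\beta,s_{\max}]_{\mathbb Z}$. For any $t\in[s_{\max}+2,T-1]_{\mathbb Z}$, the inequality $$x_t\le(\overline C-\eta V)y_t+\eta Vy_{t+1}-\sum_{s\in\mathcal S}(\overline C-\overline V-sV)(y_{t-s}-y_{t-s-1})\qquad(\ast)$$ is valid for $\mathrm{conv}(\mathcal P)$. For any $t\in[2,T-s_{\max}-1]_{\mathbb Z}$, the inequality $$x_t\le(\overline C-\eta V)y_t+\eta Vy_{t-1}-\sum_{s\in\mathcal S}(\overline C-\overline V-sV)(y_{t+s}-y_{t+s+1})\qquad(\ast\ast)$$ is valid for $\mathrm{conv}(\mathcal P)$. Furthermore, $(\ast)$ and $(\ast\ast)$ are facet-defining for $\mathrm{conv}(\mathcal P)$ when $\eta\in\{0,(\overline C-\overline V)/V\}$ or $\eta=L-1\in\mathcal S$.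
   Context: For integers $a,b$, $[a,b]_{\mathbb Z}=\{a,a+1,\dots,b\}$ if $a\le b$ and $\emptyset$ otherwise. Fix a positive integer $T$, positive integers $L$ (minimum up time) and $\ell$ (minimum down time), and reals $\overline C,\underline C,V,\overline V$ with $\overline C>\underline C>0$, $V>0$, $\overline V+V\le\overline C$ and $\underline C<\overline V<\underline C+V$. $\mathcal P$ is the set of $(\mathbf x,\mathbf y)=((x_1,\dots,x_T),(y_1,\dots,y_T))\in\mathbb R_+^T\times\{0,1\}^T$ satisfying: (i) $-y_{t-1}+y_t-y_k\le 0$ for all $t\in[2,T]_{\mathbb Z}$, $k\in[t,\min\{T,t+L-1\}]_{\mathbb Z}$; (ii) $y_{t-1}-y_t+y_k\le 1$ for all $t\in[2,T]_{\mathbb Z}$, $k\in[t,\min\{T,t+\ell-1\}]_{\mathbb Z}$; (iii) $-x_t+\underline C y_t\le 0$ and $x_t-\overline C y_t\le 0$ for all $t\in[1,T]_{\mathbb Z}$; (iv) $x_t-x_{t-1}\le Vy_{t-1}+\overline V(1-y_{t-1})$ for all $t\in[2,T]_{\mathbb Z}$; (v) $x_{t-1}-x_t\le Vy_t+\overline V(1-y_t)$ for all $t\in[2,T]_{\mathbb Z}$. $\mathrm{conv}(\mathcal P)\subseteq\mathbb R^{2T}$ is its convex hull. A linear inequality is valid for $\mathrm{conv}(\mathcal P)$ if all its points satisfy it, and facet-defining if moreover the set of points of $\mathrm{conv}(\mathcal P)$ satisfying it with equality has dimension $\dim\mathrm{conv}(\mathcal P)-1$. *)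

theory Defs
  imports "HOL-Analysis.Analysis"
begin

text \<open>A point (x,y) of R^{2T} is represented as a pair of functions nat => real;
  coordinates 1..T are the meaningful ones, all others are required to be 0 so that
  the representation is canonical.\<close>
type_synonym pt = "(nat \<Rightarrow> real) \<times> (nat \<Rightarrow> real)"

definition PSet :: "nat \<Rightarrow> nat \<Rightarrow> nat \<Rightarrow> real \<Rightarrow> real \<Rightarrow> real \<Rightarrow> real \<Rightarrow> pt set" where
  "PSet T L ell Cb Cu V Vb = {(x, y).
     (\<forall>t. t \<notin> {1..T} \<longrightarrow> x t = 0 \<and> y t = 0) \<and>
     (\<forall>t\<in>{1..T}. x t \<ge> 0 \<and> (y t = 0 \<or> y t = 1)) \<and>
     (\<forall>t\<in>{2..T}. \<forall>k\<in>{t..min T (t + L - 1)}. - y (t - 1) + y t - y k \<le> 0) \<and>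
     (\<forall>t\<in>{2..T}. \<forall>k\<in>{t..min T (t + ell - 1)}. y (t - 1) - y t + y k \<le> 1) \<and>
     (\<forall>t\<in>{1..T}. - x t + Cu * y t \<le> 0 \<and> x t - Cb * y t \<le> 0) \<and>
     (\<forall>t\<in>{2..T}. x t - x (t - 1) \<le> V * y (t - 1) + Vb * (1 - y (t - 1))) \<and>
     (\<forall>t\<in>{2..T}. x (t - 1) - x t \<le> V * y t + Vb * (1 - y t))}"

definition conv_hull :: "pt set \<Rightarrow> pt set" where
  "conv_hull S = {p. \<exists>k (c :: nat \<Rightarrow> real) (q :: nat \<Rightarrow> pt).
      (\<forall>i<k. c i \<ge> 0 \<and> q i \<in> S) \<and> (\<Sum>i<k. c i) = 1 \<and>
      p = ((\<lambda>t. \<Sum>i<k. c i * fst (q i) t), (\<lambda>t. \<Sum>i<k. c i * snd (q i) t))}"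

definition aff_indep :: "nat \<Rightarrow> (nat \<Rightarrow> pt) \<Rightarrow> bool" where
  "aff_indep k q \<longleftrightarrow> (\<forall>c :: nat \<Rightarrow> real.
      (\<Sum>i\<le>k. c i) = 0 \<and>
      (\<forall>t. (\<Sum>i\<le>k. c i * fst (q i) t) = 0 \<and> (\<Sum>i\<le>k. c i * snd (q i) t) = 0)
      \<longrightarrow> (\<forall>i\<le>k. c i = 0))"

text \<open>Dimension of a (bounded-dimensional) set of points: maximum number of affinely
  independent points in it minus one; -1 for the empty set.\<close>
definition pdim :: "pt set \<Rightarrow> int" where
  "pdim S = (if S = {} then -1 else
     int (GREATEST k. \<exists>q. (\<forall>i\<le>k. q i \<in> S) \<and> aff_indep k q))"

definition valid_ineq :: "pt set \<Rightarrow> (pt \<Rightarrow> real) \<Rightarrow> (pt \<Rightarrow> real) \<Rightarrow> bool" where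
  "valid_ineq Q lhs rhs \<longleftrightarrow> (\<forall>p\<in>Q. lhs p \<le> rhs p)"

definition facet_ineq :: "pt set \<Rightarrow> (pt \<Rightarrow> real) \<Rightarrow> (pt \<Rightarrow> real) \<Rightarrow> bool" where
  "facet_ineq Q lhs rhs \<longleftrightarrow> valid_ineq Q lhs rhs \<and>
     pdim {p\<in>Q. lhs p = rhs p} = pdim Q - 1"

end

theory Submission
  imports Defs "HOL-Library.Function_Algebras"
begin

text \<open>
  Read backwards in time from \<open>t\<close>, the terms of the sum in the start-up inequality alternate
  between start-ups (weight \<open>c s = Cb - Vb - s V\<close>) and shut-downs (weight \<open>- c s\<close>). Minimum up
  time puts every shut-down at least \<open>L\<close> periods after the preceding start-up, so condition (c)
  places it in \<open>S\<close>, and since \<open>c\<close> decreases it cancels that start-up. Hence the sum is at most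
  \<open>c \<sigma>\<close>, where \<open>\<sigma>\<close> is the distance to the last start-up, or at most 0; start-up ramping gives
  \<open>x t \<le> Vb + \<sigma> V\<close>, and if the unit shuts down at \<open>t + 1\<close> then \<open>x t \<le> Vb\<close> while minimum up
  time gives \<open>\<sigma> \<ge> L - 1 \<ge> eta\<close>. The right-hand side is linear in \<open>y\<close>, so validity passes to the
  convex hull, and the shut-down inequality is the start-up inequality of the time-reversed
  schedule.

  The hull has dimension \<open>2 T\<close>: the all-on and all-off points, a start-up at \<open>Vb\<close> in each period
  \<open>a \<ge> 2\<close>, and the all-on point with a dip of \<open>V\<close> in each period are affinely independent. For a
  facet, the start-ups are replaced by face points whose commitment switches at \<open>a\<close> (triangular
  in these switches) and the dip at \<open>t\<close> is dropped, giving \<open>2 T\<close> affinely independent points on the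
  face; conversely the face lies in the hyperplane where \<open>x t\<close> is a linear function of \<open>y\<close>.
\<close>

section \<open>Feasible schedules\<close>

definition min_up :: "nat \<Rightarrow> nat \<Rightarrow> (nat \<Rightarrow> real) \<Rightarrow> bool" where
  "min_up T L y \<longleftrightarrow> (\<forall>j k. 2 \<le> j \<longrightarrow> j \<le> k \<longrightarrow> k \<le> T \<longrightarrow> k < j + L \<longrightarrow>
     y (j - 1) = 0 \<longrightarrow> y j = 1 \<longrightarrow> y k = 1)"

lemma min_up_cong:
  assumes "\<And>\<tau>. \<tau> \<in> {1..T} \<Longrightarrow> y \<tau> = z \<tau>"
  shows "min_up T L y \<longleftrightarrow> min_up T L z"
proof -
  have "j - 1 \<in> {1..T}" "j \<in> {1..T}" "k \<in> {1..T}" if "2 \<le> j" "j \<le> k" "k \<le> T" for j k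
    using that by auto
  then show ?thesis unfolding min_up_def using assms by (metis (no_types, lifting))
qed

lemma min_up_shutdown:
  assumes "min_up T L y" "2 \<le> j" "y (j - 1) = 0" "y j = 1" "j \<le> k" "k \<le> T" "y k \<noteq> 1"
  shows "j + L \<le> k"
  using assms unfolding min_up_def by (meson not_le)

text \<open>With binary values the constraints (i) and (ii) say exactly that the profile \<open>y\<close>, resp.
  its complement \<open>1 - y\<close>, stays at 1 for \<open>L\<close>, resp. \<open>ell\<close>, periods after switching to 1.\<close>
lemma PSet_iff:
  "(x, y) \<in> PSet T L ell Cb Cu V Vb \<longleftrightarrow>
     (\<forall>\<tau>. \<tau> \<notin> {1..T} \<longrightarrow> x \<tau> = 0 \<and> y \<tau> = 0) \<and> (\<forall>\<tau>. y \<tau> = 0 \<or> y \<tau> = 1) \<and>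
     min_up T L y \<and> min_up T ell (\<lambda>\<tau>. 1 - y \<tau>) \<and>
     (\<forall>\<tau>\<in>{1..T}. 0 \<le> x \<tau> \<and> Cu * y \<tau> \<le> x \<tau> \<and> x \<tau> \<le> Cb * y \<tau>) \<and>
     (\<forall>\<tau>\<in>{2..T}. x \<tau> - x (\<tau> - 1) \<le> V * y (\<tau> - 1) + Vb * (1 - y (\<tau> - 1))) \<and>
     (\<forall>\<tau>\<in>{2..T}. x (\<tau> - 1) - x \<tau> \<le> V * y \<tau> + Vb * (1 - y \<tau>))"
proof -
  have up: "(\<forall>j\<in>{2..T}. \<forall>k\<in>{j..min T (j + L - 1)}. - y (j - 1) + y j - y k \<le> 0) \<longleftrightarrow> min_up T L y"
    if "\<forall>\<tau>. y \<tau> = 0 \<or> y \<tau> = 1" for y :: "nat \<Rightarrow> real" and L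
  proof -
    have "(- y (j - 1) + y j - y k \<le> 0) \<longleftrightarrow> (y (j - 1) = 0 \<longrightarrow> y j = 1 \<longrightarrow> y k = 1)" for j k
      using that[rule_format, of "j - 1"] that[rule_format, of j] that[rule_format, of k] by auto
    moreover have "j \<in> {2..T} \<and> k \<in> {j..min T (j + L - 1)} \<longleftrightarrow> 2 \<le> j \<and> j \<le> k \<and> k \<le> T \<and> k < j + L"
      for j k by auto
    ultimately show ?thesis unfolding min_up_def by meson
  qed
  have down: "y (j - 1) - y j + y k \<le> 1 \<longleftrightarrow> - (1 - y (j - 1)) + (1 - y j) - (1 - y k) \<le> 0" for j k
    by linarith
  show ?thesis
  proof (cases "\<forall>\<tau>. y \<tau> = 0 \<or> y \<tau> = 1")
    case True
    have "\<forall>\<tau>. 1 - y \<tau> = 0 \<or> 1 - y \<tau> = 1" using True by auto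
    note up_iff = up[OF True] up[OF this]
    show ?thesis
      unfolding PSet_def mem_Collect_eq prod.case down up_iff using True by auto
  next
    case False
    then show ?thesis unfolding PSet_def by auto
  qed
qed

lemma
  assumes "(x, y) \<in> PSet T L ell Cb Cu V Vb"
  shows PSet_supp: "\<tau> \<notin> {1..T} \<Longrightarrow> x \<tau> = 0 \<and> y \<tau> = 0"
    and PSet_binary: "y \<tau> = 0 \<or> y \<tau> = 1"
    and PSet_min_up: "min_up T L y"
    and PSet_x_le: "x \<tau> \<le> Cb * y \<tau>"
    and PSet_ramp_up: "\<tau> \<in> {2..T} \<Longrightarrow> x \<tau> - x (\<tau> - 1) \<le> V * y (\<tau> - 1) + Vb * (1 - y (\<tau> - 1))"
    and PSet_ramp_down: "\<tau> \<in> {2..T} \<Longrightarrow> x (\<tau> - 1) - x \<tau> \<le> V * y \<tau> + Vb * (1 - y \<tau>)"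
  using assms unfolding PSet_iff by (cases "\<tau> \<in> {1..T}"; simp)+

lemma binary_switch:
  fixes f :: "nat \<Rightarrow> real"
  assumes "i < k" "f i \<noteq> f k" and binary: "\<And>j. f j = 0 \<or> f j = 1"
  shows "\<exists>j. i < j \<and> j \<le> k \<and> f (j - 1) = f i \<and> f j = f k"
proof -
  define j where "j = (LEAST j. i < j \<and> f j = f k)"
  have j: "i < j" "f j = f k" unfolding j_def by (rule LeastI2[of _ k]; use assms in simp)+
  have "j \<le> k" unfolding j_def by (rule Least_le) (use assms in simp)
  moreover have "f (j - 1) \<noteq> f k"
  proof (cases "j - 1 = i")
    case False
    then have "i < j - 1" "j - 1 < j" using j by auto
    then show ?thesis using not_less_Least[of "j - 1" "\<lambda>j. i < j \<and> f j = f k"] unfolding j_def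
      by blast
  qed (use assms in simp)
  ultimately show ?thesis using j assms(2) binary[of i] binary[of k] binary[of "j - 1"]
    by (intro exI[of _ j]) auto
qed

lemma min_up_reverse:
  assumes binary: "\<And>\<tau>. y \<tau> = 0 \<or> y \<tau> = 1" and up: "min_up T L y"
  shows "min_up T L (\<lambda>\<tau>. y (T + 1 - \<tau>))"
  unfolding min_up_def
proof (intro allI impI)
  fix j k assume jk: "2 \<le> j" "j \<le> k" "k \<le> T" "k < j + L"
    and off: "y (T + 1 - (j - 1)) = 0" and on: "y (T + 1 - j) = 1"
  define a b where "a = T + 1 - (j - 1)" and "b = T + 1 - k"
  have ab: "2 \<le> a" "a \<le> T" "1 \<le> b" "b \<le> a - 1" "a \<le> b + L" "T + 1 - j = a - 1"
    using jk by (auto simp: a_def b_def)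
  show "y (T + 1 - k) = 1"
  proof (rule ccontr)
    assume "y (T + 1 - k) \<noteq> 1"
    then have "y b = 0" using binary unfolding b_def by blast
    then have "b < a - 1" using on ab by (metis le_neq_implies_less zero_neq_one)
    then obtain j' where j': "b < j'" "j' \<le> a - 1" "y (j' - 1) = 0" "y j' = 1"
      using binary_switch[of b "a - 1" y] \<open>y b = 0\<close> on ab binary by auto
    have "2 \<le> j'" "j' \<le> a" "a \<le> T" "y a \<noteq> 1" using j' ab off by (auto simp: a_def)
    then have "j' + L \<le> a" by (rule min_up_shutdown[OF up _ j'(3,4)])
    then show False using j' ab by simp
  qed
qed

definition time_rev :: "nat \<Rightarrow> (nat \<Rightarrow> real) \<Rightarrow> nat \<Rightarrow> real" where
  "time_rev T f \<tau> = (if \<tau> \<in> {1..T} then f (T + 1 - \<tau>) else 0)"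

lemma time_rev_in_PSet:
  assumes p: "(x, y) \<in> PSet T L ell Cb Cu V Vb"
  shows "(time_rev T x, time_rev T y) \<in> PSet T L ell Cb Cu V Vb"
proof -
  note P = p[unfolded PSet_iff]
  have binary: "y \<tau> = 0 \<or> y \<tau> = 1" "1 - y \<tau> = 0 \<or> 1 - y \<tau> = 1" for \<tau>
    using P by auto
  have "min_up T L (time_rev T y)"
    using min_up_reverse[OF binary(1)] P by (subst min_up_cong) (auto simp: time_rev_def)
  moreover have "min_up T ell (\<lambda>\<tau>. 1 - time_rev T y \<tau>)"
    using min_up_reverse[OF binary(2)] P by (subst min_up_cong) (auto simp: time_rev_def)
  moreover have "time_rev T x \<tau> - time_rev T x (\<tau> - 1) \<le>
      V * time_rev T y (\<tau> - 1) + Vb * (1 - time_rev T y (\<tau> - 1))"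
    "time_rev T x (\<tau> - 1) - time_rev T x \<tau> \<le> V * time_rev T y \<tau> + Vb * (1 - time_rev T y \<tau>)"
    if "\<tau> \<in> {2..T}" for \<tau>
  proof -
    define \<sigma> where "\<sigma> = T + 2 - \<tau>"
    have \<sigma>: "\<sigma> \<in> {2..T}" and "\<tau> \<in> {1..T}" "\<tau> - 1 \<in> {1..T}"
      and "T + 1 - \<tau> = \<sigma> - 1" "T + 1 - (\<tau> - 1) = \<sigma>"
      using that by (auto simp: \<sigma>_def)
    then have ev: "time_rev T x \<tau> = x (\<sigma> - 1)" "time_rev T x (\<tau> - 1) = x \<sigma>"
      "time_rev T y \<tau> = y (\<sigma> - 1)" "time_rev T y (\<tau> - 1) = y \<sigma>"
      by (simp_all add: time_rev_def)
    show "time_rev T x \<tau> - time_rev T x (\<tau> - 1) \<le>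
      V * time_rev T y (\<tau> - 1) + Vb * (1 - time_rev T y (\<tau> - 1))"
      unfolding ev by (rule PSet_ramp_down[OF p \<sigma>])
    show "time_rev T x (\<tau> - 1) - time_rev T x \<tau> \<le> V * time_rev T y \<tau> + Vb * (1 - time_rev T y \<tau>)"
      unfolding ev by (rule PSet_ramp_up[OF p \<sigma>])
  qed
  ultimately show ?thesis
    using P unfolding PSet_iff by (auto simp: time_rev_def)
qed

section \<open>Validity of the start-up inequality on \<open>P\<close>\<close>

context
  fixes T L smax t :: nat and y c :: "nat \<Rightarrow> real" and S :: "nat set"
  assumes binary: "\<And>\<tau>. y \<tau> = 0 \<or> y \<tau> = 1" and up: "min_up T L y"
    and S_le: "S \<subseteq> {..smax}" and S_gaps: "\<And>m. m \<le> smax \<Longrightarrow> m \<notin> S \<Longrightarrow> smax < m + L"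
    and c_antimono: "\<And>s s'. s \<le> s' \<Longrightarrow> c s' \<le> c s" and c_nonneg: "0 \<le> c smax"
    and t: "smax + 2 \<le> t" "t \<le> T"
begin

definition startup_tail :: "nat \<Rightarrow> real" where
  "startup_tail m = (\<Sum>s=m..smax. if s \<in> S then c s * (y (t - s) - y (t - s - 1)) else 0)"

definition tail_bound :: "nat \<Rightarrow> bool" where
  "tail_bound m \<longleftrightarrow> startup_tail m \<le> 0 \<or>
     (\<exists>\<sigma>\<in>S. m \<le> \<sigma> \<and> startup_tail m \<le> c \<sigma> \<and> y (t - \<sigma> - 1) = 0 \<and> (\<forall>k\<in>{t - \<sigma>..t - m}. y k = 1))"

lemma startup_tail_Suc:
  "m \<le> smax \<Longrightarrow>
    startup_tail m = startup_tail (Suc m) + (if m \<in> S then c m * (y (t - m) - y (t - m - 1)) else 0)"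
  unfolding startup_tail_def by (simp add: sum.atLeast_Suc_atMost)

lemma tail_bound_Suc_nonpos:
  assumes m: "m \<le> smax" and nonpos: "startup_tail (Suc m) \<le> 0"
  shows "tail_bound m"
proof (cases "m \<in> S \<and> y (t - m) = 1 \<and> y (t - m - 1) = 0")
  case True
  then show ?thesis unfolding tail_bound_def startup_tail_Suc[OF m] using nonpos
    by (intro disjI2 bexI[of _ m]) auto
next
  case False
  have "0 \<le> c m" using c_antimono[OF m] c_nonneg by simp
  with False have "(if m \<in> S then c m * (y (t - m) - y (t - m - 1)) else 0) \<le> 0"
    using binary[of "t - m"] binary[of "t - m - 1"] by auto
  then show ?thesis unfolding tail_bound_def startup_tail_Suc[OF m] using nonpos by simp
qed

lemma tail_bound_Suc_run:
  assumes m: "m \<le> smax" and \<sigma>: "\<sigma> \<in> S" "Suc m \<le> \<sigma>" and tail: "startup_tail (Suc m) \<le> c \<sigma>"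
    and start: "y (t - \<sigma> - 1) = 0" and run: "\<forall>k\<in>{t - \<sigma>..t - Suc m}. y k = 1"
  shows "tail_bound m"
proof -
  have \<sigma>_le: "\<sigma> \<le> smax" "2 \<le> t - \<sigma>" using \<sigma>(1) S_le t by auto
  have on: "y (t - m - 1) = 1" using \<sigma>(2) run by (simp add: Suc_diff_Suc)
  show ?thesis
  proof (cases "y (t - m) = 1")
    case True
    have "y k = 1" if "k \<in> {t - \<sigma>..t - m}" for k
    proof (cases "k = t - m")
      case False
      then have "k \<in> {t - \<sigma>..t - Suc m}" using that by auto
      then show ?thesis using run by blast
    qed (use True in simp)
    then show ?thesis unfolding tail_bound_def startup_tail_Suc[OF m] using \<sigma> tail start True on
      by (intro disjI2 bexI[of _ \<sigma>]) simp_all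
  next
    case False
    then have off: "y (t - m) = 0" using binary by blast
    have "y (t - \<sigma> - 1) = 0" "y (t - \<sigma>) = 1" "t - \<sigma> \<le> t - m" "t - m \<le> T" "y (t - m) \<noteq> 1"
      using start run \<sigma> \<sigma>_le t off by auto
    then have "t - \<sigma> + L \<le> t - m" by (rule min_up_shutdown[OF up \<sigma>_le(2)])
    then have "m \<in> S" using S_gaps[OF m] \<sigma>_le t by fastforce
    moreover have "c \<sigma> \<le> c m" using \<sigma>(2) by (intro c_antimono) simp
    ultimately show ?thesis unfolding tail_bound_def startup_tail_Suc[OF m] using tail off on by simp
  qed
qed

lemma tail_bound_step: "m \<le> smax \<Longrightarrow> tail_bound (Suc m) \<Longrightarrow> tail_bound m"
  unfolding tail_bound_def[of "Suc m"] using tail_bound_Suc_nonpos tail_bound_Suc_run by blast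

lemma startup_sum_bound:
  "(\<Sum>s\<in>S. c s * (y (t - s) - y (t - s - 1))) \<le> 0 \<or>
   (\<exists>\<sigma>\<in>S. (\<Sum>s\<in>S. c s * (y (t - s) - y (t - s - 1))) \<le> c \<sigma> \<and> y (t - \<sigma> - 1) = 0 \<and>
      (\<forall>k\<in>{t - \<sigma>..t}. y k = 1))"
proof -
  have "tail_bound 0"
  proof (rule inc_induct[of 0 "Suc smax"])
    show "tail_bound (Suc smax)" by (simp add: tail_bound_def startup_tail_def)
  qed (auto intro: tail_bound_step)
  moreover have "startup_tail 0 = (\<Sum>s\<in>S. c s * (y (t - s) - y (t - s - 1)))"
    unfolding startup_tail_def using S_le by (simp add: sum.If_cases atLeast0AtMost Int_absorb1)
  ultimately show ?thesis by (simp add: tail_bound_def)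
qed

end

lemma PSet_startup_ramp:
  assumes p: "(x, y) \<in> PSet T L ell Cb Cu V Vb" and j: "2 \<le> j" "y (j - 1) = 0"
  shows "j + n \<le> T \<Longrightarrow> \<forall>k\<in>{j..j + n}. y k = 1 \<Longrightarrow> x (j + n) \<le> Vb + real n * V"
proof (induction n)
  case 0
  have "x (j - 1) \<le> 0" using PSet_x_le[OF p, of "j - 1"] j by simp
  moreover have "x j - x (j - 1) \<le> Vb" using PSet_ramp_up[OF p, of j] j 0 by simp
  ultimately show ?case by simp
next
  case (Suc n)
  then have "x (j + n) \<le> Vb + real n * V" "y (j + n) = 1" by auto
  moreover have "x (j + Suc n) - x (j + n) \<le> V * y (j + n) + Vb * (1 - y (j + n))"
    using PSet_ramp_up[OF p, of "j + Suc n"] j Suc.prems by simp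
  ultimately show ?case by (simp add: algebra_simps)
qed

lemma PSet_shutdown:
  assumes p: "(x, y) \<in> PSet T L ell Cb Cu V Vb" and "1 \<le> \<tau>" "\<tau> < T" "y (\<tau> + 1) = 0"
  shows "x \<tau> \<le> Vb"
  using PSet_x_le[OF p, of "\<tau> + 1"] PSet_ramp_down[OF p, of "\<tau> + 1"] assms by simp

lemma PSet_x_le_eta:
  assumes p: "(x, y) \<in> PSet T L ell Cb Cu V Vb"
    and eta: "0 \<le> eta" "0 \<le> V" "eta * V \<le> Cb - Vb" and t: "1 \<le> t" "t < T"
  shows "x t \<le> (Cb - eta * V) * y t + eta * V * y (t + 1)"
proof -
  note binary = PSet_binary[OF p]
  consider "y t = 0" | "y t = 1" "y (t + 1) = 0" | "y t = 1" "y (t + 1) = 1" using binary by metis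
  then show ?thesis
  proof cases
    case 1
    moreover have "0 \<le> eta * V * y (t + 1)" using eta binary[of "t + 1"] by auto
    ultimately show ?thesis using PSet_x_le[OF p, of t] by simp
  next
    case 2
    then show ?thesis using PSet_shutdown[OF p t] eta by simp
  next
    case 3
    then show ?thesis using PSet_x_le[OF p, of t] by simp
  qed
qed

lemma PSet_startup_ineq:
  assumes p: "(x, y) \<in> PSet T L ell Cb Cu V Vb"
    and V: "0 \<le> V" and smax: "real smax * V \<le> Cb - Vb"
    and eta: "0 \<le> eta" "eta \<le> real L - 1" "eta * V \<le> Cb - Vb"
    and S_le: "S \<subseteq> {..smax}" and S_gaps: "\<And>m. m \<le> smax \<Longrightarrow> m \<notin> S \<Longrightarrow> smax < m + L"
    and t: "smax + 2 \<le> t" "t < T"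
  shows "x t \<le> (Cb - eta * V) * y t + eta * V * y (t + 1)
           - (\<Sum>s\<in>S. (Cb - Vb - real s * V) * (y (t - s) - y (t - s - 1)))"
    (is "_ \<le> _ - ?P")
proof -
  have "?P \<le> 0 \<or> (\<exists>\<sigma>\<in>S. ?P \<le> Cb - Vb - real \<sigma> * V \<and> y (t - \<sigma> - 1) = 0 \<and> (\<forall>k\<in>{t - \<sigma>..t}. y k = 1))"
    by (rule startup_sum_bound[OF PSet_binary[OF p] PSet_min_up[OF p] S_le S_gaps _ _ t(1)])
      (use V smax t in \<open>auto intro: mult_right_mono\<close>)
  then consider (nonpos) "?P \<le> 0"
    | (run) \<sigma> where "\<sigma> \<in> S" "?P \<le> Cb - Vb - real \<sigma> * V" "y (t - \<sigma> - 1) = 0" "\<forall>k\<in>{t - \<sigma>..t}. y k = 1"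
    by blast
  then show ?thesis
  proof cases
    case nonpos
    then show ?thesis using PSet_x_le_eta[OF p eta(1) V eta(3), of t] t by simp
  next
    case run
    have \<sigma>: "\<sigma> \<le> smax" "2 \<le> t - \<sigma>" "y t = 1" using run(1,4) S_le t by auto
    have ramp: "x t \<le> Vb + real \<sigma> * V"
      using PSet_startup_ramp[OF p \<sigma>(2), of \<sigma>] run(3,4) \<sigma> t by (simp add: Suc_diff_Suc)
    show ?thesis
    proof (cases "y (t + 1) = 1")
      case True
      then show ?thesis using ramp run(2) \<sigma>(3) by (simp add: algebra_simps)
    next
      case False
      have "y (t - \<sigma> - 1) = 0" "y (t - \<sigma>) = 1" "t - \<sigma> \<le> t + 1" "t + 1 \<le> T" "y (t + 1) \<noteq> 1"
        using run(3,4) \<sigma> t False by auto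
      then have "t - \<sigma> + L \<le> t + 1" by (rule min_up_shutdown[OF PSet_min_up[OF p] \<sigma>(2)])
      then have "eta * V \<le> real \<sigma> * V" using eta V \<sigma> by (intro mult_right_mono) auto
      moreover have "y (t + 1) = 0" using False PSet_binary[OF p] by metis
      ultimately show ?thesis using PSet_shutdown[OF p, of t] t run(2) \<sigma>(3) by simp
    qed
  qed
qed

section \<open>Linear forms and convex hulls\<close>

definition lin_form :: "((nat \<Rightarrow> real) \<Rightarrow> real) \<Rightarrow> bool" where
  "lin_form g \<longleftrightarrow> (\<forall>(k::nat) c ys. g (\<lambda>\<tau>. \<Sum>i<k. c i * ys i \<tau>) = (\<Sum>i<k. c i * g (ys i)))"

lemma lin_form_eval: "lin_form (\<lambda>y. y \<tau>)"
  by (simp add: lin_form_def)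

lemma lin_form_add: "lin_form f \<Longrightarrow> lin_form g \<Longrightarrow> lin_form (\<lambda>y. f y + g y)"
  by (simp add: lin_form_def sum.distrib distrib_left)

lemma lin_form_diff: "lin_form f \<Longrightarrow> lin_form g \<Longrightarrow> lin_form (\<lambda>y. f y - g y)"
  by (simp add: lin_form_def sum_subtractf right_diff_distrib)

lemma lin_form_scale: "lin_form g \<Longrightarrow> lin_form (\<lambda>y. a * g y)"
  by (simp add: lin_form_def sum_distrib_left mult.left_commute)

lemma lin_form_sum:
  assumes "\<And>s. s \<in> S \<Longrightarrow> lin_form (g s)"
  shows "lin_form (\<lambda>y. \<Sum>s\<in>S. g s y)"
  unfolding lin_form_def
proof (intro allI)
  fix k :: nat and c ys
  have "(\<Sum>s\<in>S. g s (\<lambda>\<tau>. \<Sum>i<k. c i * ys i \<tau>)) = (\<Sum>s\<in>S. \<Sum>i<k. c i * g s (ys i))"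
    using assms by (intro sum.cong refl) (simp add: lin_form_def)
  also have "\<dots> = (\<Sum>i<k. \<Sum>s\<in>S. c i * g s (ys i))" by (rule sum.swap)
  finally show "(\<Sum>s\<in>S. g s (\<lambda>\<tau>. \<Sum>i<k. c i * ys i \<tau>)) = (\<Sum>i<k. c i * (\<Sum>s\<in>S. g s (ys i)))"
    by (simp add: sum_distrib_left)
qed

lemmas lin_form_intros = lin_form_eval lin_form_add lin_form_diff lin_form_scale lin_form_sum

lemma conv_hullE:
  assumes "p \<in> conv_hull S"
  obtains k :: nat and c q where "\<And>i. i < k \<Longrightarrow> 0 \<le> c i \<and> q i \<in> S" "(\<Sum>i<k. c i) = 1"
    "p = ((\<lambda>\<tau>. \<Sum>i<k. c i * fst (q i) \<tau>), (\<lambda>\<tau>. \<Sum>i<k. c i * snd (q i) \<tau>))"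
  using assms unfolding conv_hull_def mem_Collect_eq
  apply (elim exE conjE)
  subgoal for k c q by (rule that[of k c q]) simp_all
  done

lemma conv_hull_superset: "p \<in> S \<Longrightarrow> p \<in> conv_hull S"
  unfolding conv_hull_def
  by (intro CollectI exI[of _ "1::nat"] exI[of _ "\<lambda>_. 1::real"] exI[of _ "\<lambda>_::nat. p"]) simp

lemma conv_hull_supp:
  assumes "\<And>q. q \<in> S \<Longrightarrow> fst q \<tau> = 0 \<and> snd q \<tau> = 0" and "p \<in> conv_hull S"
  shows "fst p \<tau> = 0 \<and> snd p \<tau> = 0"
  using assms(2)
proof (rule conv_hullE)
  fix k :: nat and c q
  assume "\<And>i. i < k \<Longrightarrow> 0 \<le> c i \<and> q i \<in> S"
    and "p = ((\<lambda>\<tau>. \<Sum>i<k. c i * fst (q i) \<tau>), (\<lambda>\<tau>. \<Sum>i<k. c i * snd (q i) \<tau>))"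
  then show ?thesis using assms(1) by (auto intro!: sum.neutral)
qed

lemma conv_hull_valid:
  assumes g: "lin_form g" and valid: "\<And>q. q \<in> S \<Longrightarrow> fst q t \<le> g (snd q)"
    and "p \<in> conv_hull S"
  shows "fst p t \<le> g (snd p)"
  using assms(3)
proof (rule conv_hullE)
  fix k :: nat and c q
  assume cq: "\<And>i. i < k \<Longrightarrow> 0 \<le> c i \<and> q i \<in> S"
    and p: "p = ((\<lambda>\<tau>. \<Sum>i<k. c i * fst (q i) \<tau>), (\<lambda>\<tau>. \<Sum>i<k. c i * snd (q i) \<tau>))"
  have "fst p t = (\<Sum>i<k. c i * fst (q i) t)" using p by simp
  also have "\<dots> \<le> (\<Sum>i<k. c i * g (snd (q i)))"
    using cq valid by (intro sum_mono mult_left_mono) auto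
  also have "\<dots> = g (snd p)" using g p by (simp add: lin_form_def)
  finally show ?thesis .
qed

section \<open>Bounds on the number of affinely independent points\<close>

definition coord :: "pt \<Rightarrow> nat + nat \<Rightarrow> real" where
  "coord p = case_sum (fst p) (snd p)"

lemma aff_indep_coord:
  "aff_indep k q \<longleftrightarrow> (\<forall>c. (\<Sum>i\<le>k. c i) = 0 \<and> (\<forall>n. (\<Sum>i\<le>k. c i * coord (q i) n) = 0) \<longrightarrow> (\<forall>i\<le>k. c i = 0))"
  unfolding aff_indep_def coord_def split_sum_all by (simp add: all_conj_distrib)

lemma sum_fun_apply: "(\<Sum>x\<in>A. f x) n = (\<Sum>x\<in>A. f x n)"
  by (induction A rule: infinite_finite_induct) (auto simp: plus_fun_def)

lemma vector_space_fun: "vector_space (\<lambda>(r::real) (f::'a \<Rightarrow> real) n. r * f n)"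
  by unfold_locales (auto simp: fun_eq_iff algebra_simps)

lemma independent_family_inj:
  fixes w :: "nat \<Rightarrow> 'a \<Rightarrow> real"
  assumes indep: "\<And>c. \<forall>n. (\<Sum>i<k. c i * w i n) = 0 \<Longrightarrow> \<forall>i<k. c i = 0"
  shows "inj_on w {..<k}"
proof (rule inj_onI, rule ccontr)
  fix i j assume ij: "i \<in> {..<k}" "j \<in> {..<k}" "w i = w j" "i \<noteq> j"
  define c where "c m = (if m = i then 1 else if m = j then -1 else (0::real))" for m
  have "(\<Sum>m<k. c m * w m n) = (\<Sum>m\<in>{i, j}. c m * w m n)" for n
    by (rule sum.mono_neutral_right) (use ij in \<open>auto simp: c_def\<close>)
  then have "\<forall>n. (\<Sum>m<k. c m * w m n) = 0" using ij by (simp add: c_def)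
  then have "c i = 0" using indep[of c] ij by blast
  then show False by (simp add: c_def)
qed

lemma independent_family_le_card:
  fixes w :: "nat \<Rightarrow> 'a \<Rightarrow> real"
  assumes N: "finite N" and supp: "\<And>i n. i < k \<Longrightarrow> n \<notin> N \<Longrightarrow> w i n = 0"
    and indep: "\<And>c. \<forall>n. (\<Sum>i<k. c i * w i n) = 0 \<Longrightarrow> \<forall>i<k. c i = 0"
  shows "k \<le> card N"
proof -
  interpret v: vector_space "\<lambda>(r::real) (f::'a \<Rightarrow> real) n. r * f n" by (rule vector_space_fun)
  define \<delta> where "\<delta> m n = (if n = m then 1 else (0::real))" for m n :: 'a
  have inj: "inj_on w {..<k}" using indep by (rule independent_family_inj)
  have indep_w: "v.independent (w ` {..<k})"
  proof (rule v.independent_if_scalars_zero)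
    fix f x assume h: "(\<Sum>x\<in>w ` {..<k}. (\<lambda>n. f x * x n)) = 0" and x: "x \<in> w ` {..<k}"
    have "(\<Sum>i<k. f (w i) * w i n) = 0" for n
      using fun_cong[OF h, of n] by (simp add: sum_fun_apply sum.reindex[OF inj])
    then show "f x = 0" using indep[of "f \<circ> w"] x by auto
  qed simp
  have span: "w ` {..<k} \<subseteq> v.span (\<delta> ` N)"
  proof
    fix x assume "x \<in> w ` {..<k}"
    then obtain i where i: "i < k" "x = w i" by auto
    have "x = (\<Sum>m\<in>N. (\<lambda>n. w i m * \<delta> m n))"
    proof
      fix n
      show "x n = (\<Sum>m\<in>N. (\<lambda>n. w i m * \<delta> m n)) n"
        using supp i N by (cases "n \<in> N") (auto simp: sum_fun_apply \<delta>_def if_distrib cong: if_cong)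
    qed
    also have "\<dots> \<in> v.span (\<delta> ` N)"
      by (intro v.span_sum v.span_scale v.span_base) auto
    finally show "x \<in> v.span (\<delta> ` N)" .
  qed
  have "card (w ` {..<k}) \<le> card (\<delta> ` N)"
    using v.independent_span_bound[OF _ indep_w span] N by auto
  also have "\<dots> \<le> card N" by (rule card_image_le[OF N])
  finally show ?thesis using card_image[OF inj] by simp
qed

lemma aff_indep_le_card:
  assumes aff: "aff_indep k q" and N: "finite N"
    and determined: "\<And>c. (\<Sum>i\<le>k. c i) = 0 \<Longrightarrow> \<forall>n\<in>N. (\<Sum>i\<le>k. c i * coord (q i) n) = 0 \<Longrightarrow>
      \<forall>n. (\<Sum>i\<le>k. c i * coord (q i) n) = 0"
  shows "k \<le> card N"
proof (rule independent_family_le_card[OF N])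
  define w where "w i n = (if n \<in> N then coord (q (Suc i)) n - coord (q 0) n else 0)" for i n
  show "w i n = 0" if "n \<notin> N" for i n using that by (simp add: w_def)
  fix c assume h: "\<forall>n. (\<Sum>i<k. c i * w i n) = 0"
  define c' where "c' j = (if j = 0 then - (\<Sum>i<k. c i) else c (j - 1))" for j
  have shift: "(\<Sum>j\<le>k. c' j * f j) = (\<Sum>i<k. c i * (f (Suc i) - f 0))" for f :: "nat \<Rightarrow> real"
    by (simp add: c'_def sum.atMost_shift sum_distrib_right right_diff_distrib sum_subtractf)
  have "(\<Sum>j\<le>k. c' j) = 0" using shift[of "\<lambda>_. 1"] by simp
  moreover have "(\<Sum>j\<le>k. c' j * coord (q j) n) = (\<Sum>i<k. c i * w i n)" if "n \<in> N" for n
    using that by (simp add: shift w_def)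
  then have "\<forall>n\<in>N. (\<Sum>j\<le>k. c' j * coord (q j) n) = 0" using h by simp
  ultimately have "\<forall>j\<le>k. c' j = 0" using aff determined unfolding aff_indep_coord by blast
  then show "\<forall>i<k. c i = 0"
  proof (intro allI impI)
    fix i assume "\<forall>j\<le>k. c' j = 0" "i < k"
    then have "c' (Suc i) = 0" by simp
    then show "c i = 0" by (simp add: c'_def)
  qed
qed

lemma coord_outside:
  assumes "\<And>\<tau>. \<tau> \<notin> {1..T} \<Longrightarrow> fst p \<tau> = 0 \<and> snd p \<tau> = 0" and "n \<notin> {1..T} <+> {1..T}"
  shows "coord p n = 0"
proof (cases n)
  case (Inl a)
  then have "a \<notin> {1..T}" using assms(2) by blast
  then show ?thesis using Inl assms(1) by (simp add: coord_def)
next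
  case (Inr b)
  then have "b \<notin> {1..T}" using assms(2) by blast
  then show ?thesis using Inr assms(1) by (simp add: coord_def)
qed

lemma aff_indep_supported_le:
  assumes "aff_indep k q" and supp: "\<And>i \<tau>. i \<le> k \<Longrightarrow> \<tau> \<notin> {1..T} \<Longrightarrow> fst (q i) \<tau> = 0 \<and> snd (q i) \<tau> = 0"
  shows "k \<le> 2 * T"
proof -
  have "k \<le> card ({1..T} <+> {1..T})"
  proof (rule aff_indep_le_card[OF assms(1)])
    fix c assume h: "\<forall>n\<in>{1..T} <+> {1..T}. (\<Sum>i\<le>k. c i * coord (q i) n) = 0"
    have "(\<Sum>i\<le>k. c i * coord (q i) n) = 0" if "n \<notin> {1..T} <+> {1..T}" for n
      using coord_outside[OF supp that] by simp
    then show "\<forall>n. (\<Sum>i\<le>k. c i * coord (q i) n) = 0" using h by blast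
  qed simp
  then show ?thesis by (simp add: card_Plus)
qed

lemma aff_indep_face_le:
  assumes "aff_indep k q" and supp: "\<And>i \<tau>. i \<le> k \<Longrightarrow> \<tau> \<notin> {1..T} \<Longrightarrow> fst (q i) \<tau> = 0 \<and> snd (q i) \<tau> = 0"
    and g: "lin_form g" and t: "t \<in> {1..T}" and face: "\<And>i. i \<le> k \<Longrightarrow> fst (q i) t = g (snd (q i))"
  shows "k \<le> 2 * T - 1"
proof -
  have "k \<le> card (({1..T} <+> {1..T}) - {Inl t})"
  proof (rule aff_indep_le_card[OF assms(1)])
    fix c assume h: "\<forall>n\<in>({1..T} <+> {1..T}) - {Inl t}. (\<Sum>i\<le>k. c i * coord (q i) n) = 0"
    have outside: "(\<Sum>i\<le>k. c i * coord (q i) n) = 0" if "n \<notin> {1..T} <+> {1..T}" for n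
      using coord_outside[OF supp that] by simp
    have "(\<Sum>i\<le>k. c i * coord (q i) (Inr \<tau>)) = 0" for \<tau>
      using h outside by (cases "\<tau> \<in> {1..T}") auto
    then have y0: "(\<Sum>i<Suc k. c i * snd (q i) \<tau>) = 0" for \<tau>
      by (simp add: coord_def lessThan_Suc_atMost)
    have "(\<Sum>i\<le>k. c i * coord (q i) (Inl t)) = (\<Sum>i<Suc k. c i * g (snd (q i)))"
      using face by (simp add: coord_def lessThan_Suc_atMost)
    also have "\<dots> = g (\<lambda>\<tau>. \<Sum>i<Suc k. c i * snd (q i) \<tau>)"
      using g unfolding lin_form_def by metis
    also have "\<dots> = g (\<lambda>\<tau>. \<Sum>i<0. c i * snd (q i) \<tau>)"
      unfolding y0 by simp
    also have "\<dots> = 0" using g unfolding lin_form_def by (metis lessThan_0 sum.empty)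
    finally have "(\<Sum>i\<le>k. c i * coord (q i) (Inl t)) = 0" .
    then show "\<forall>n. (\<Sum>i\<le>k. c i * coord (q i) n) = 0"
      using h outside by (metis Diff_iff singletonD)
  qed simp
  moreover have "Inl t \<in> {1..T} <+> {1..T}" using t by blast
  ultimately show ?thesis by (simp add: card_Diff_singleton card_Plus)
qed

lemma pdim_eqI:
  assumes "\<exists>q. (\<forall>i\<le>m. q i \<in> X) \<and> aff_indep m q"
    and "\<And>k q. \<forall>i\<le>k. q i \<in> X \<Longrightarrow> aff_indep k q \<Longrightarrow> k \<le> m"
  shows "pdim X = int m"
proof -
  have "(GREATEST k. \<exists>q. (\<forall>i\<le>k. q i \<in> X) \<and> aff_indep k q) = m"
    by (rule Greatest_equality) (use assms in blast)+
  moreover have "X \<noteq> {}" using assms(1) by blast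
  ultimately show ?thesis by (simp add: pdim_def)
qed

section \<open>Affinely independent points of \<open>P\<close>\<close>

definition block_pt :: "nat \<Rightarrow> nat \<Rightarrow> real \<Rightarrow> pt" where
  "block_pt a b X = ((\<lambda>\<tau>. if a \<le> \<tau> \<and> \<tau> \<le> b then X else 0), (\<lambda>\<tau>. if a \<le> \<tau> \<and> \<tau> \<le> b then 1 else 0))"

definition ramp_pt :: "nat \<Rightarrow> nat \<Rightarrow> nat \<Rightarrow> real \<Rightarrow> real \<Rightarrow> pt" where
  "ramp_pt T a m Vb V = ((\<lambda>\<tau>. if a \<le> \<tau> \<and> \<tau> \<le> T then Vb + real (min \<tau> m - a) * V else 0),
     (\<lambda>\<tau>. if a \<le> \<tau> \<and> \<tau> \<le> T then 1 else 0))"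

definition dip_pt :: "nat \<Rightarrow> real \<Rightarrow> real \<Rightarrow> nat \<Rightarrow> pt" where
  "dip_pt T Cb V j = ((\<lambda>\<tau>. if 1 \<le> \<tau> \<and> \<tau> \<le> T then (if \<tau> = j then Cb - V else Cb) else 0),
     (\<lambda>\<tau>. if 1 \<le> \<tau> \<and> \<tau> \<le> T then 1 else 0))"

lemma block_pt_in_PSet:
  assumes ab: "1 \<le> a" "b \<le> T" and X: "0 \<le> Cu" "Cu \<le> X" "X \<le> Cb" and "0 \<le> V" "0 \<le> Vb"
    and start: "a = 1 \<or> X \<le> Vb" and stop: "b = T \<or> X \<le> Vb" and up: "a = 1 \<or> b = T \<or> a + L \<le> b + 1"
  shows "block_pt a b X \<in> PSet T L ell Cb Cu V Vb"
proof -
  have "min_up T L (\<lambda>\<tau>. if a \<le> \<tau> \<and> \<tau> \<le> b then 1 else 0)"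
    using up unfolding min_up_def by auto
  moreover have "min_up T ell (\<lambda>\<tau>. 1 - (if a \<le> \<tau> \<and> \<tau> \<le> b then 1 else 0))"
    unfolding min_up_def by auto
  ultimately show ?thesis
    using assms unfolding PSet_iff block_pt_def prod.case by auto
qed

lemma ramp_pt_in_PSet:
  assumes a: "2 \<le> a" "a \<le> m" "m \<le> T" and top: "Vb + real (m - a) * V \<le> Cb"
    and Cu: "0 \<le> Cu" "Cu \<le> Vb" and V: "0 \<le> V"
  shows "ramp_pt T a m Vb V \<in> PSet T L ell Cb Cu V Vb"
proof -
  define r where "r \<tau> = Vb + real (min \<tau> m - a) * V" for \<tau>
  have r_ge: "Vb \<le> r \<tau>" for \<tau> using V by (simp add: r_def)
  have r_le: "r \<tau> \<le> Cb" for \<tau>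
  proof -
    have "real (min \<tau> m - a) * V \<le> real (m - a) * V" by (rule mult_right_mono[OF _ V]) simp
    then show ?thesis using top by (simp add: r_def)
  qed
  have r_mono: "r (\<tau> - 1) \<le> r \<tau>" for \<tau>
    using mult_right_mono[OF _ V, of "real (min (\<tau> - 1) m - a)" "real (min \<tau> m - a)"] by (simp add: r_def)
  have r_step: "r \<tau> - r (\<tau> - 1) \<le> V" if "a \<le> \<tau> - 1" for \<tau>
  proof -
    have "real (min \<tau> m - a) \<le> real (min (\<tau> - 1) m - a) + 1" using that by auto
    from mult_right_mono[OF this V] show ?thesis by (simp add: r_def algebra_simps)
  qed
  have eq: "ramp_pt T a m Vb V = ((\<lambda>\<tau>. if a \<le> \<tau> \<and> \<tau> \<le> T then r \<tau> else 0), (\<lambda>\<tau>. if a \<le> \<tau> \<and> \<tau> \<le> T then 1 else 0))"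
    by (simp add: ramp_pt_def r_def fun_eq_iff)
  have "Cu \<le> r \<tau>" "0 \<le> r \<tau>" "0 \<le> Vb" "r (\<tau> - 1) - r \<tau> \<le> V" "- r \<tau> \<le> V" for \<tau>
    using r_ge[of \<tau>] r_mono[of \<tau>] Cu V by auto
  moreover have "r \<tau> \<le> Vb" if "\<tau> - 1 < a" "a \<le> \<tau>" for \<tau>
    using that by (simp add: r_def)
  ultimately show ?thesis
    using a r_le r_step unfolding eq PSet_iff min_up_def prod.case
    by (auto simp: not_le intro: order.trans[OF _ r_ge])
qed

lemma dip_pt_in_PSet:
  assumes "0 \<le> Cu" "Cu \<le> Cb - V" "0 \<le> V"
  shows "dip_pt T Cb V j \<in> PSet T L ell Cb Cu V Vb"
  using assms unfolding PSet_iff dip_pt_def min_up_def prod.case by auto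

lemma triangular_combination_zero:
  fixes D :: "nat \<Rightarrow> nat \<Rightarrow> real"
  assumes A: "finite A" and comb: "\<And>m. m \<in> A \<Longrightarrow> (\<Sum>b\<in>A. c b * D b m) = 0"
    and diag: "\<And>b. b \<in> A \<Longrightarrow> D b b \<noteq> 0" and tri: "\<And>b m. b \<in> A \<Longrightarrow> m \<in> A \<Longrightarrow> b < m \<Longrightarrow> D b m = 0"
    and "a \<in> A"
  shows "c a = 0"
  using \<open>a \<in> A\<close>
proof (induction "Max A - a" arbitrary: a rule: less_induct)
  case less
  have "c b * D b a = 0" if "b \<in> A - {a}" for b
  proof (cases "b < a")
    case False
    moreover have "b \<le> Max A" using that A by simp
    ultimately have "Max A - b < Max A - a" using that by auto
    then show ?thesis using less.hyps that by simp
  qed (use tri that less.prems in simp)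
  then have "(\<Sum>b\<in>A - {a}. c b * D b a) = 0" by (rule sum.neutral[rule_format])
  then have "(\<Sum>b\<in>A. c b * D b a) = c a * D a a"
    using A less.prems by (simp add: sum.remove)
  then show "c a = 0" using comb[OF less.prems] diag[OF less.prems] by simp
qed

definition witness_family :: "nat \<Rightarrow> real \<Rightarrow> real \<Rightarrow> (nat \<Rightarrow> pt) \<Rightarrow> (nat \<Rightarrow> nat) \<Rightarrow> nat \<Rightarrow> pt" where
  "witness_family T Cb V r j i =
     (if i = 0 then block_pt 1 T Cb else if i = 1 then ((\<lambda>_. 0), (\<lambda>_. 0))
      else if i \<le> T then r i else dip_pt T Cb V (j (i - T)))"

lemma sum_atMost_split_witness:
  fixes f :: "nat \<Rightarrow> real"
  assumes "1 \<le> T" "T \<le> k"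
  shows "(\<Sum>i\<le>k. f i) = f 0 + f 1 + (\<Sum>a\<in>{2..T}. f a) + (\<Sum>i\<in>{T<..k}. f i)"
proof -
  have "{..k} = {0, 1} \<union> ({2..T} \<union> {T<..k})" using assms by auto
  then have "(\<Sum>i\<le>k. f i) = (\<Sum>i\<in>{0, 1}. f i) + (\<Sum>i\<in>{2..T} \<union> {T<..k}. f i)"
    by (simp only:) (rule sum.union_disjoint, use assms in auto)
  also have "\<dots> = f 0 + f 1 + (\<Sum>a\<in>{2..T}. f a) + (\<Sum>i\<in>{T<..k}. f i)"
    by (subst sum.union_disjoint) auto
  finally show ?thesis .
qed

lemma witness_family_rows_zero:
  assumes T: "1 \<le> T" "T \<le> k"
    and diag: "\<And>a. a \<in> {2..T} \<Longrightarrow> snd (r a) a \<noteq> snd (r a) (a - 1)"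
    and tri: "\<And>a m. a \<in> {2..T} \<Longrightarrow> m \<in> {2..T} \<Longrightarrow> a < m \<Longrightarrow> snd (r a) m = snd (r a) (m - 1)"
    and comb: "\<And>\<tau>. (\<Sum>i\<le>k. c i * snd (witness_family T Cb V r j i) \<tau>) = 0"
    and a: "a \<in> {2..T}"
  shows "c a = 0"
proof (rule triangular_combination_zero[where A = "{2..T}" and D = "\<lambda>a m. snd (r a) m - snd (r a) (m - 1)"])
  let ?q = "witness_family T Cb V r j"
  fix m assume m: "m \<in> {2..T}"
  have "(\<Sum>i\<le>k. c i * (snd (?q i) m - snd (?q i) (m - 1))) = 0"
    using comb by (simp add: right_diff_distrib sum_subtractf)
  moreover have "(\<Sum>i\<in>{T<..k}. c i * (snd (?q i) m - snd (?q i) (m - 1))) = 0"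
    using m by (intro sum.neutral) (auto simp: witness_family_def dip_pt_def)
  moreover have "snd (?q 0) m = snd (?q 0) (m - 1)" "snd (?q 1) m = snd (?q 1) (m - 1)"
    using m by (auto simp: witness_family_def block_pt_def)
  moreover have "?q a = r a" if "a \<in> {2..T}" for a using that by (simp add: witness_family_def)
  ultimately show "(\<Sum>a\<in>{2..T}. c a * (snd (r a) m - snd (r a) (m - 1))) = 0"
    unfolding sum_atMost_split_witness[OF T] by simp
qed (use diag tri a in auto)

lemma witness_family_dip_value:
  assumes j: "inj_on j {1..k - T}" "j ` {1..k - T} \<subseteq> {1..T}" and i: "i \<in> {T<..k}" "i' \<in> {T<..k}"
  shows "fst (witness_family T Cb V r j i') (j (i - T)) = (if i' = i then Cb - V else Cb)"
proof -
  have iT: "i - T \<in> {1..k - T}" "i' - T \<in> {1..k - T}" using i by auto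
  then have "j (i - T) \<in> {1..T}" using j(2) by blast
  moreover have "j (i - T) = j (i' - T) \<longleftrightarrow> i' = i" using inj_on_eq_iff[OF j(1) iT] i by auto
  ultimately show ?thesis using i by (simp add: witness_family_def dip_pt_def)
qed

lemma witness_family_aff_indep:
  assumes T: "1 \<le> T" "T \<le> k" and V: "V \<noteq> 0"
    and j: "inj_on j {1..k - T}" "j ` {1..k - T} \<subseteq> {1..T}"
    and diag: "\<And>a. a \<in> {2..T} \<Longrightarrow> snd (r a) a \<noteq> snd (r a) (a - 1)"
    and tri: "\<And>a m. a \<in> {2..T} \<Longrightarrow> m \<in> {2..T} \<Longrightarrow> a < m \<Longrightarrow> snd (r a) m = snd (r a) (m - 1)"
  shows "aff_indep k (witness_family T Cb V r j)"
  unfolding aff_indep_def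
proof (rule allI, rule impI)
  fix c :: "nat \<Rightarrow> real"
  let ?q = "witness_family T Cb V r j"
  assume h: "(\<Sum>i\<le>k. c i) = 0 \<and>
    (\<forall>t. (\<Sum>i\<le>k. c i * fst (?q i) t) = 0 \<and> (\<Sum>i\<le>k. c i * snd (?q i) t) = 0)"
  have row_zero: "c a = 0" if "a \<in> {2..T}" for a
    by (rule witness_family_rows_zero[OF T diag tri _ that]) (use h in blast)+
  have q_dip: "?q i = dip_pt T Cb V (j (i - T))" if "i \<in> {T<..k}" for i
    using that T by (simp add: witness_family_def)
  have reduced: "(\<Sum>i\<le>k. c i * f i) = c 0 * f 0 + c 1 * f 1 + (\<Sum>i\<in>{T<..k}. c i * f i)" for f
    using row_zero unfolding sum_atMost_split_witness[OF T] by simp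
  have dips_y: "c 0 + (\<Sum>i\<in>{T<..k}. c i) = 0"
    using h[THEN conjunct2, rule_format, of 1] q_dip T
    unfolding reduced by (simp add: witness_family_def block_pt_def dip_pt_def)
  have c1: "c 1 = 0" using h dips_y unfolding reduced[of "\<lambda>_. 1", simplified] by simp
  have dip_zero: "c i0 = 0" if i0: "i0 \<in> {T<..k}" for i0
  proof -
    have "i0 - T \<in> {1..k - T}" using i0 by auto
    then have "j (i0 - T) \<in> {1..T}" using j(2) by blast
    have "(\<Sum>i\<in>{T<..k}. c i * fst (?q i) (j (i0 - T))) = (\<Sum>i\<in>{T<..k}. c i * Cb - (if i = i0 then c i0 * V else 0))"
      using witness_family_dip_value[OF j i0] by (intro sum.cong refl) (simp add: right_diff_distrib)
    also have "\<dots> = (\<Sum>i\<in>{T<..k}. c i * Cb) - c i0 * V" using i0 by (simp add: sum_subtractf)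
    finally have "(\<Sum>i\<in>{T<..k}. c i * fst (?q i) (j (i0 - T))) = (\<Sum>i\<in>{T<..k}. c i * Cb) - c i0 * V" .
    moreover have "(\<Sum>i\<le>k. c i * fst (?q i) (j (i0 - T))) = 0" using h by blast
    moreover have "fst (?q 0) (j (i0 - T)) = Cb" "fst (?q 1) (j (i0 - T)) = 0"
      using \<open>j (i0 - T) \<in> {1..T}\<close> by (simp_all add: witness_family_def block_pt_def)
    ultimately have "c 0 * Cb + ((\<Sum>i\<in>{T<..k}. c i * Cb) - c i0 * V) = 0"
      unfolding reduced by simp
    moreover have "c 0 * Cb + (\<Sum>i\<in>{T<..k}. c i * Cb) = 0"
      using dips_y by (simp add: sum_distrib_right[symmetric] distrib_right[symmetric])
    ultimately have "c i0 * V = 0" by linarith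
    then show ?thesis using V by simp
  qed
  have c0: "c 0 = 0" using dips_y dip_zero by simp
  show "\<forall>i\<le>k. c i = 0"
  proof (intro allI impI)
    fix i assume "i \<le> k"
    then consider "i = 0" | "i = 1" | "i \<in> {2..T}" | "i \<in> {T<..k}" by fastforce
    then show "c i = 0" using c0 c1 row_zero dip_zero by cases auto
  qed
qed

lemma witness_family_in_PSet:
  assumes rows: "\<And>a. a \<in> {2..T} \<Longrightarrow> r a \<in> PSet T L ell Cb Cu V Vb"
    and "0 \<le> Cu" "Cu \<le> Cb - V" "0 \<le> V" "0 \<le> Vb"
  shows "witness_family T Cb V r j i \<in> PSet T L ell Cb Cu V Vb"
proof -
  consider "i = 0" | "i = 1" | "i \<in> {2..T}" | "T < i" "1 < i" by fastforce
  then show ?thesis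
  proof cases
    case 1
    have "block_pt 1 T Cb \<in> PSet T L ell Cb Cu V Vb" by (rule block_pt_in_PSet) (use assms in auto)
    then show ?thesis using 1 by (simp add: witness_family_def)
  next
    case 2
    then show ?thesis using assms by (simp add: witness_family_def PSet_iff min_up_def)
  next
    case 3
    then show ?thesis using rows by (simp add: witness_family_def)
  next
    case 4
    then show ?thesis using dip_pt_in_PSet assms by (simp add: witness_family_def)
  qed
qed

lemma conv_hull_PSet_supp:
  "p \<in> conv_hull (PSet T L ell Cb Cu V Vb) \<Longrightarrow> \<tau> \<notin> {1..T} \<Longrightarrow> fst p \<tau> = 0 \<and> snd p \<tau> = 0"
  by (rule conv_hull_supp[of _ \<tau>]) (auto dest: PSet_supp)

lemma pdim_conv_hull_PSet:
  assumes "1 \<le> T" "0 < V" "0 \<le> Cu" "Cu \<le> Vb" "Vb \<le> Cb" "Cu \<le> Cb - V"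
  shows "pdim (conv_hull (PSet T L ell Cb Cu V Vb)) = int (2 * T)"
proof (rule pdim_eqI)
  let ?q = "witness_family T Cb V (\<lambda>a. block_pt a T Vb) id"
  have "aff_indep (2 * T) ?q"
    by (rule witness_family_aff_indep) (use assms in \<open>auto simp: block_pt_def\<close>)
  moreover have "?q i \<in> conv_hull (PSet T L ell Cb Cu V Vb)" for i
    by (intro conv_hull_superset witness_family_in_PSet block_pt_in_PSet) (use assms in auto)
  ultimately show "\<exists>q. (\<forall>i\<le>2 * T. q i \<in> conv_hull (PSet T L ell Cb Cu V Vb)) \<and> aff_indep (2 * T) q"
    by blast
next
  fix k q assume h: "\<forall>i\<le>k. q i \<in> conv_hull (PSet T L ell Cb Cu V Vb)" "aff_indep k q"
  show "k \<le> 2 * T"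
    by (rule aff_indep_supported_le[OF h(2)], rule conv_hull_PSet_supp[of _ T L ell Cb Cu V Vb]) (use h(1) in auto)
qed

lemma facet_ineqI:
  assumes Q: "Q = conv_hull (PSet T L ell Cb Cu V Vb)" and dim: "pdim Q = int (2 * T)"
    and valid: "valid_ineq Q (\<lambda>p. fst p t) (\<lambda>p. g (snd p))" and g: "lin_form g" and t: "t \<in> {1..T}"
    and face: "\<And>i. i \<le> 2 * T - 1 \<Longrightarrow> q i \<in> PSet T L ell Cb Cu V Vb \<and> fst (q i) t = g (snd (q i))"
    and indep: "aff_indep (2 * T - 1) q"
  shows "facet_ineq Q (\<lambda>p. fst p t) (\<lambda>p. g (snd p))"
proof -
  have "pdim {p \<in> Q. fst p t = g (snd p)} = int (2 * T - 1)"
  proof (rule pdim_eqI)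
    show "\<exists>q. (\<forall>i\<le>2 * T - 1. q i \<in> {p \<in> Q. fst p t = g (snd p)}) \<and> aff_indep (2 * T - 1) q"
      using face indep conv_hull_superset unfolding Q by (intro exI[of _ q]) simp
  next
    fix k q assume h: "\<forall>i\<le>k. q i \<in> {p \<in> Q. fst p t = g (snd p)}" "aff_indep k q"
    show "k \<le> 2 * T - 1"
      by (rule aff_indep_face_le[OF h(2) _ g t], rule conv_hull_PSet_supp[of _ T L ell Cb Cu V Vb])
        (use h(1) in \<open>auto simp: Q\<close>)
  qed
  then show ?thesis using valid dim t unfolding facet_ineq_def by simp
qed

lemma block_pt_jump:
  assumes "1 \<le> a" "a \<le> b" "1 \<le> m"
  shows "snd (block_pt a b X) m - snd (block_pt a b X) (m - 1) =
    (if m = a then 1 else 0) - (if m = b + 1 then 1 else 0)"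
  using assms by (auto simp: block_pt_def)

lemma startup_sum_block:
  assumes "1 \<le> a" "a \<le> b" "S \<subseteq> {..<t}"
  shows "(\<Sum>s\<in>S. c s * (snd (block_pt a b X) (t - s) - snd (block_pt a b X) (t - s - 1))) =
    (if a \<le> t \<and> t - a \<in> S then c (t - a) else 0) - (if b < t \<and> t - (b + 1) \<in> S then c (t - (b + 1)) else 0)"
proof -
  have "(\<Sum>s\<in>S. c s * (snd (block_pt a b X) (t - s) - snd (block_pt a b X) (t - s - 1))) =
      (\<Sum>s\<in>S. (if s = t - a \<and> a \<le> t then c s else 0) - (if s = t - (b + 1) \<and> b < t then c s else 0))"
  proof (rule sum.cong[OF refl])
    fix s assume "s \<in> S"
    then have "s < t" using assms(3) by auto
    then have "t - s = a \<longleftrightarrow> s = t - a \<and> a \<le> t" "t - s = b + 1 \<longleftrightarrow> s = t - (b + 1) \<and> b < t"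
      and "1 \<le> t - s" by auto
    then show "c s * (snd (block_pt a b X) (t - s) - snd (block_pt a b X) (t - s - 1)) =
        (if s = t - a \<and> a \<le> t then c s else 0) - (if s = t - (b + 1) \<and> b < t then c s else 0)"
      using block_pt_jump[OF assms(1,2), of "t - s" X] by simp
  qed
  also have "\<dots> = (if a \<le> t \<and> t - a \<in> S then c (t - a) else 0) - (if b < t \<and> t - (b + 1) \<in> S then c (t - (b + 1)) else 0)"
    using finite_subset[OF assms(3)] assms(2) by (cases "a \<le> t"; cases "b < t") (simp_all add: sum_subtractf)
  finally show ?thesis .
qed

lemma aff_indep_time_rev:
  assumes aff: "aff_indep k q"
    and supp: "\<And>i \<tau>. i \<le> k \<Longrightarrow> \<tau> \<notin> {1..T} \<Longrightarrow> fst (q i) \<tau> = 0 \<and> snd (q i) \<tau> = 0"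
  shows "aff_indep k (\<lambda>i. (time_rev T (fst (q i)), time_rev T (snd (q i))))"
  unfolding aff_indep_def
proof (rule allI, rule impI)
  fix c :: "nat \<Rightarrow> real"
  assume h: "(\<Sum>i\<le>k. c i) = 0 \<and> (\<forall>t. (\<Sum>i\<le>k. c i * fst (time_rev T (fst (q i)), time_rev T (snd (q i))) t) = 0
    \<and> (\<Sum>i\<le>k. c i * snd (time_rev T (fst (q i)), time_rev T (snd (q i))) t) = 0)"
  have "(\<Sum>i\<le>k. c i * fst (q i) t) = 0 \<and> (\<Sum>i\<le>k. c i * snd (q i) t) = 0" for t
  proof (cases "t \<in> {1..T}")
    case True
    then have "T + 1 - t \<in> {1..T}" "T + 1 - (T + 1 - t) = t" by auto
    then show ?thesis using h[THEN conjunct2, rule_format, of "T + 1 - t"] by (simp add: time_rev_def)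
  qed (simp add: supp)
  then show "\<forall>i\<le>k. c i = 0" using aff h unfolding aff_indep_def by blast
qed

section \<open>The start-up and shut-down inequalities\<close>

locale strong_ramp_ineqs =
  fixes T L ell :: nat and Cb Cu V Vb eta :: real and alpha beta smax :: nat
  assumes L_pos: "0 < L" and Cu_pos: "0 < Cu" and V_pos: "0 < V" and Vb_V: "Vb + V \<le> Cb" and Cu_Vb: "Cu < Vb"
    and eta_nonneg: "0 \<le> eta" and eta_le: "eta \<le> min (real L - 1) ((Cb - Vb) / V)"
    and smax_T: "int smax \<le> int T - 3" and smax_le: "int smax \<le> \<lfloor>(Cb - Vb) / V\<rfloor>"
    and alpha_beta: "alpha < beta" and beta_smax: "beta \<le> smax" and gap: "beta = alpha + 1 \<or> smax \<le> L + alpha"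
begin

abbreviation S :: "nat set" where "S \<equiv> {0..alpha} \<union> {beta..smax}"

definition startup_rhs :: "nat \<Rightarrow> (nat \<Rightarrow> real) \<Rightarrow> real" where
  "startup_rhs t y = (Cb - eta * V) * y t + eta * V * y (t + 1)
     - (\<Sum>s\<in>S. (Cb - Vb - real s * V) * (y (t - s) - y (t - s - 1)))"

definition shutdown_rhs :: "nat \<Rightarrow> (nat \<Rightarrow> real) \<Rightarrow> real" where
  "shutdown_rhs t y = (Cb - eta * V) * y t + eta * V * y (t - 1)
     - (\<Sum>s\<in>S. (Cb - Vb - real s * V) * (y (t + s) - y (t + s + 1)))"

lemma lin_form_rhs: "lin_form (startup_rhs t)" "lin_form (shutdown_rhs t)"
  unfolding startup_rhs_def shutdown_rhs_def by (intro lin_form_intros)+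

lemma smax_V: "real smax * V \<le> Cb - Vb"
proof -
  have "real smax \<le> (Cb - Vb) / V" using smax_le by linarith
  then show ?thesis using V_pos by (simp add: pos_le_divide_eq)
qed

lemma eta_V: "eta * V \<le> Cb - Vb"
  using eta_le V_pos by (simp add: pos_le_divide_eq)

lemma T_ge: "smax + 3 \<le> T"
  using smax_T by linarith

lemma S_le: "S \<subseteq> {..smax}"
  using alpha_beta beta_smax by auto

lemma S_gaps: "m \<le> smax \<Longrightarrow> m \<notin> S \<Longrightarrow> smax < m + L"
  using gap alpha_beta by auto

lemma startup_rhs_time_rev:
  assumes t: "2 \<le> t" "t + smax < T"
  shows "startup_rhs (T + 1 - t) (time_rev T y) = shutdown_rhs t y"
    and "shutdown_rhs t (time_rev T y) = startup_rhs (T + 1 - t) y"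
proof -
  have ev: "time_rev T f (T + 1 - t) = f t" "time_rev T f t = f (T + 1 - t)"
    "time_rev T f (T + 1 - t + 1) = f (t - 1)" "time_rev T f (t - 1) = f (T + 1 - t + 1)" for f
    using t by (auto simp: time_rev_def Suc_diff_le)
  have ev_S: "time_rev T f (T + 1 - t - s) = f (t + s)" "time_rev T f (T + 1 - t - s - 1) = f (t + s + 1)"
    "time_rev T f (t + s) = f (T + 1 - t - s)" "time_rev T f (t + s + 1) = f (T + 1 - t - s - 1)"
    if "s \<in> S" for f s
    using that S_le t by (auto simp: time_rev_def)
  have "(\<Sum>s\<in>S. (Cb - Vb - real s * V) * (time_rev T y (T + 1 - t - s) - time_rev T y (T + 1 - t - s - 1)))
      = (\<Sum>s\<in>S. (Cb - Vb - real s * V) * (y (t + s) - y (t + s + 1)))"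
    by (rule sum.cong[OF refl]) (simp only: ev_S)
  then show "startup_rhs (T + 1 - t) (time_rev T y) = shutdown_rhs t y"
    unfolding startup_rhs_def shutdown_rhs_def ev by simp
  have "(\<Sum>s\<in>S. (Cb - Vb - real s * V) * (time_rev T y (t + s) - time_rev T y (t + s + 1)))
      = (\<Sum>s\<in>S. (Cb - Vb - real s * V) * (y (T + 1 - t - s) - y (T + 1 - t - s - 1)))"
    by (rule sum.cong[OF refl]) (simp only: ev_S)
  then show "shutdown_rhs t (time_rev T y) = startup_rhs (T + 1 - t) y"
    unfolding startup_rhs_def shutdown_rhs_def ev by simp
qed

lemma startup_ineq_PSet:
  assumes "p \<in> PSet T L ell Cb Cu V Vb" "smax + 2 \<le> t" "t < T"
  shows "fst p t \<le> startup_rhs t (snd p)"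
  using PSet_startup_ineq[of "fst p" "snd p", OF _ _ smax_V eta_nonneg _ eta_V S_le S_gaps] assms V_pos eta_le
  unfolding startup_rhs_def by simp

lemma shutdown_ineq_PSet:
  assumes p: "p \<in> PSet T L ell Cb Cu V Vb" and t: "2 \<le> t" "t + smax < T"
  shows "fst p t \<le> shutdown_rhs t (snd p)"
proof -
  have "(time_rev T (fst p), time_rev T (snd p)) \<in> PSet T L ell Cb Cu V Vb"
    using time_rev_in_PSet[of "fst p" "snd p"] p by simp
  moreover have "smax + 2 \<le> T + 1 - t" "T + 1 - t < T" using t by auto
  ultimately have "time_rev T (fst p) (T + 1 - t) \<le> startup_rhs (T + 1 - t) (time_rev T (snd p))"
    using startup_ineq_PSet[of "(time_rev T (fst p), time_rev T (snd p))" "T + 1 - t"] by simp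
  moreover have "time_rev T (fst p) (T + 1 - t) = fst p t" using t by (auto simp: time_rev_def)
  ultimately show ?thesis using startup_rhs_time_rev(1)[OF t] by simp
qed

lemma startup_rhs_block:
  assumes ab: "1 \<le> a" "a \<le> b" and t: "smax + 2 \<le> t"
  shows "startup_rhs t (snd (block_pt a b X)) =
    (Cb - eta * V) * (if a \<le> t \<and> t \<le> b then 1 else 0) + eta * V * (if a \<le> t + 1 \<and> t + 1 \<le> b then 1 else 0)
    - ((if a \<le> t \<and> t - a \<in> S then Cb - Vb - real (t - a) * V else 0)
       - (if b < t \<and> t - (b + 1) \<in> S then Cb - Vb - real (t - (b + 1)) * V else 0))"
proof -
  have "S \<subseteq> {..<t}" using S_le t by auto
  from startup_sum_block[OF ab this] show ?thesis
    unfolding startup_rhs_def by (simp add: block_pt_def)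
qed

lemma startup_rhs_on:
  assumes "smax + 2 \<le> t" "t < T"
  shows "startup_rhs t (snd (block_pt 1 T X)) = Cb"
  using startup_rhs_block[of 1 T t X] assms S_le by force

definition face_witness :: "nat \<Rightarrow> nat \<Rightarrow> pt \<Rightarrow> bool" where
  "face_witness t a r \<longleftrightarrow> r \<in> PSet T L ell Cb Cu V Vb \<and> fst r t = startup_rhs t (snd r) \<and>
     snd r a \<noteq> snd r (a - 1) \<and> (\<forall>m. a < m \<and> m \<le> T \<longrightarrow> snd r m = snd r (m - 1))"

text \<open>Each facet condition on \<open>eta\<close> supplies its own face point switching at \<open>t + 1\<close>:
  a start-up at \<open>t + 1\<close>, a shut-down after running at \<open>Vb\<close> since period 1, or a run of
  exactly \<open>L\<close> periods ending at \<open>t\<close>.\<close>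
definition switch_pt :: "nat \<Rightarrow> pt" where
  "switch_pt t = (if eta = 0 then block_pt (t + 1) T Vb
     else if eta = (Cb - Vb) / V then block_pt 1 t Vb else block_pt (t + 1 - L) t Vb)"

lemma face_witness_switch_pt:
  assumes t: "smax + 2 \<le> t" "t < T"
    and eta_facet: "eta = 0 \<or> eta = (Cb - Vb) / V \<or> (eta = real L - 1 \<and> L - 1 \<in> S)"
  shows "face_witness t (t + 1) (switch_pt t)"
proof -
  have t1: "t - 1 \<notin> S" using S_le t by auto
  have basics: "0 \<le> Cu" "Cu \<le> Vb" "Vb \<le> Cb" "0 \<le> V" "0 \<le> Vb" using Cu_pos Cu_Vb Vb_V V_pos by auto
  consider (zero) "eta = 0" | (full) "eta \<noteq> 0" "eta = (Cb - Vb) / V"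
    | (minup) "eta \<noteq> 0" "eta \<noteq> (Cb - Vb) / V" "eta = real L - 1" "L - 1 \<in> S"
    using eta_facet by blast
  then show ?thesis
  proof cases
    case zero
    then have "switch_pt t = block_pt (t + 1) T Vb" unfolding switch_pt_def by simp
    moreover have "block_pt (t + 1) T Vb \<in> PSet T L ell Cb Cu V Vb"
      by (rule block_pt_in_PSet) (use basics t in auto)
    ultimately show ?thesis unfolding face_witness_def using zero t startup_rhs_block[of "t + 1" T t Vb]
      by (auto simp: block_pt_def)
  next
    case full
    then have "switch_pt t = block_pt 1 t Vb" "eta * V = Cb - Vb" using V_pos unfolding switch_pt_def by simp_all
    moreover have "block_pt 1 t Vb \<in> PSet T L ell Cb Cu V Vb"
      by (rule block_pt_in_PSet) (use basics t in auto)
    ultimately show ?thesis unfolding face_witness_def using t t1 startup_rhs_block[of 1 t t Vb]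
      by (auto simp: block_pt_def)
  next
    case minup
    have L: "L - 1 \<le> smax" "t + 1 - L \<ge> 2" "t - (t + 1 - L) = L - 1" using minup(4) S_le t L_pos by auto
    have "switch_pt t = block_pt (t + 1 - L) t Vb" using minup unfolding switch_pt_def by simp
    moreover have "block_pt (t + 1 - L) t Vb \<in> PSet T L ell Cb Cu V Vb"
      by (rule block_pt_in_PSet) (use basics t L in auto)
    moreover have "real (L - 1) = eta" using minup L_pos by (simp add: of_nat_diff)
    ultimately show ?thesis unfolding face_witness_def using t L L_pos minup(4) startup_rhs_block[of "t + 1 - L" t t Vb]
      by (auto simp: block_pt_def)
  qed
qed

definition face_row :: "nat \<Rightarrow> nat \<Rightarrow> pt" where
  "face_row t a = (if a = t + 1 then switch_pt t else if t + 2 \<le> a then block_pt a T Vb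
     else if t - a \<in> S then ramp_pt T a t Vb V else block_pt 1 (a - 1) Vb)"

lemma face_witness_face_row:
  assumes t: "smax + 2 \<le> t" "t < T" and a: "a \<in> {2..T}" "a \<noteq> t + 1"
  shows "face_witness t a (face_row t a)"
proof -
  have t1: "t - 1 \<notin> S" using S_le t by auto
  have basics: "0 \<le> Cu" "Cu \<le> Vb" "Vb \<le> Cb" "0 \<le> V" "0 \<le> Vb" using Cu_pos Cu_Vb Vb_V V_pos by auto
  consider (late) "t + 2 \<le> a" | (ramp) "a \<le> t" "t - a \<in> S" | (early) "a \<le> t" "t - a \<notin> S"
    using a by linarith
  then show ?thesis
  proof cases
    case late
    then have "face_row t a = block_pt a T Vb" using a by (simp add: face_row_def)
    moreover have "block_pt a T Vb \<in> PSet T L ell Cb Cu V Vb"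
      by (rule block_pt_in_PSet) (use basics a in auto)
    ultimately show ?thesis unfolding face_witness_def using late a t startup_rhs_block[of a T t Vb]
      by (auto simp: block_pt_def)
  next
    case ramp
    have "real (t - a) * V \<le> real smax * V" using ramp(2) S_le V_pos by (intro mult_right_mono) auto
    then have top: "Vb + real (t - a) * V \<le> Cb" using smax_V by simp
    have "face_row t a = ramp_pt T a t Vb V" using ramp a by (simp add: face_row_def)
    moreover have "ramp_pt T a t Vb V \<in> PSet T L ell Cb Cu V Vb"
      by (rule ramp_pt_in_PSet) (use basics a ramp t top in auto)
    moreover have "snd (ramp_pt T a t Vb V) = snd (block_pt a T Vb)" by (simp add: ramp_pt_def block_pt_def)
    ultimately show ?thesis unfolding face_witness_def using ramp a t startup_rhs_block[of a T t Vb]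
      by (auto simp: block_pt_def ramp_pt_def)
  next
    case early
    then have "face_row t a = block_pt 1 (a - 1) Vb" using a by (auto simp: face_row_def)
    moreover have "block_pt 1 (a - 1) Vb \<in> PSet T L ell Cb Cu V Vb"
      by (rule block_pt_in_PSet) (use basics a in auto)
    ultimately show ?thesis unfolding face_witness_def using early a t t1 startup_rhs_block[of 1 "a - 1" t Vb]
      by (auto simp: block_pt_def)
  qed
qed

definition face_family :: "nat \<Rightarrow> nat \<Rightarrow> pt" where
  "face_family t = witness_family T Cb V (face_row t) (\<lambda>i. if i < t then i else i + 1)"

lemma face_family_face:
  assumes t: "smax + 2 \<le> t" "t < T"
    and eta_facet: "eta = 0 \<or> eta = (Cb - Vb) / V \<or> (eta = real L - 1 \<and> L - 1 \<in> S)"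
  shows "aff_indep (2 * T - 1) (face_family t)"
    and "\<And>i. i \<le> 2 * T - 1 \<Longrightarrow>
      face_family t i \<in> PSet T L ell Cb Cu V Vb \<and> fst (face_family t i) t = startup_rhs t (snd (face_family t i))"
proof -
  have rows: "face_witness t a (face_row t a)" if "a \<in> {2..T}" for a
    using face_witness_switch_pt[OF t eta_facet] face_witness_face_row[OF t that]
    by (cases "a = t + 1") (simp_all add: face_row_def)
  show "aff_indep (2 * T - 1) (face_family t)"
    unfolding face_family_def
    by (rule witness_family_aff_indep) (use t V_pos rows in \<open>auto simp: inj_on_def face_witness_def\<close>)
  fix i assume i: "i \<le> 2 * T - 1"
  have basics: "0 \<le> Cu" "Cu \<le> Cb - V" "0 \<le> V" "0 \<le> Vb" using Cu_pos Cu_Vb Vb_V V_pos by auto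
  show "face_family t i \<in> PSet T L ell Cb Cu V Vb \<and> fst (face_family t i) t = startup_rhs t (snd (face_family t i))"
  proof (intro conjI)
    show "face_family t i \<in> PSet T L ell Cb Cu V Vb"
      unfolding face_family_def by (rule witness_family_in_PSet) (use rows basics in \<open>auto simp: face_witness_def\<close>)
    have on: "startup_rhs t (snd (block_pt 1 T X)) = Cb" for X by (rule startup_rhs_on[OF t])
    consider "i = 0" | "i = 1" | "i \<in> {2..T}" | "T < i" "1 < i" by fastforce
    then show "fst (face_family t i) t = startup_rhs t (snd (face_family t i))"
    proof cases
      case 4
      have "snd (dip_pt T Cb V j) = snd (block_pt 1 T Cb)" for j by (auto simp: dip_pt_def block_pt_def)
      then show ?thesis using 4 i t on by (auto simp: face_family_def witness_family_def dip_pt_def)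
    qed (use t rows on in \<open>auto simp: face_family_def witness_family_def block_pt_def startup_rhs_def
      face_witness_def\<close>)
  qed
qed

lemma valid_startup_ineq:
  assumes "smax + 2 \<le> t" "t < T"
  shows "valid_ineq (conv_hull (PSet T L ell Cb Cu V Vb)) (\<lambda>p. fst p t) (\<lambda>p. startup_rhs t (snd p))"
  unfolding valid_ineq_def using conv_hull_valid[OF lin_form_rhs(1) startup_ineq_PSet] assms by blast

lemma valid_shutdown_ineq:
  assumes "2 \<le> t" "t + smax < T"
  shows "valid_ineq (conv_hull (PSet T L ell Cb Cu V Vb)) (\<lambda>p. fst p t) (\<lambda>p. shutdown_rhs t (snd p))"
  unfolding valid_ineq_def using conv_hull_valid[OF lin_form_rhs(2) shutdown_ineq_PSet] assms by blast

lemma pdim_conv_hull: "pdim (conv_hull (PSet T L ell Cb Cu V Vb)) = int (2 * T)"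
  by (rule pdim_conv_hull_PSet) (use T_ge V_pos Cu_pos Cu_Vb Vb_V in auto)

lemma facet_startup_ineq:
  assumes t: "smax + 2 \<le> t" "t < T"
    and eta_facet: "eta = 0 \<or> eta = (Cb - Vb) / V \<or> (eta = real L - 1 \<and> L - 1 \<in> S)"
  shows "facet_ineq (conv_hull (PSet T L ell Cb Cu V Vb)) (\<lambda>p. fst p t) (\<lambda>p. startup_rhs t (snd p))"
  by (rule facet_ineqI[OF refl pdim_conv_hull valid_startup_ineq[OF t] lin_form_rhs(1) _
        face_family_face(2)[OF t eta_facet] face_family_face(1)[OF t eta_facet]])
    (use t in auto)

lemma facet_shutdown_ineq:
  assumes t: "2 \<le> t" "t + smax < T"
    and eta_facet: "eta = 0 \<or> eta = (Cb - Vb) / V \<or> (eta = real L - 1 \<and> L - 1 \<in> S)"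
  shows "facet_ineq (conv_hull (PSet T L ell Cb Cu V Vb)) (\<lambda>p. fst p t) (\<lambda>p. shutdown_rhs t (snd p))"
proof -
  define t' where "t' = T + 1 - t"
  have t': "smax + 2 \<le> t'" "t' < T" "T + 1 - t' = t" using t by (auto simp: t'_def)
  define q where "q i = (time_rev T (fst (face_family t' i)), time_rev T (snd (face_family t' i)))" for i
  note face = face_family_face(2)[OF t'(1,2) eta_facet]
  show ?thesis
  proof (rule facet_ineqI[OF refl pdim_conv_hull valid_shutdown_ineq[OF t] lin_form_rhs(2)])
    show "t \<in> {1..T}" using t by auto
    show "q i \<in> PSet T L ell Cb Cu V Vb \<and> fst (q i) t = shutdown_rhs t (snd (q i))" if "i \<le> 2 * T - 1" for i
    proof
      show "q i \<in> PSet T L ell Cb Cu V Vb"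
        using face[OF that] time_rev_in_PSet[of "fst (face_family t' i)" "snd (face_family t' i)"]
        by (simp add: q_def)
      have "fst (q i) t = fst (face_family t' i) t'" using t by (simp add: q_def time_rev_def t'_def)
      also have "\<dots> = startup_rhs t' (snd (face_family t' i))" using face[OF that] by simp
      also have "\<dots> = shutdown_rhs t (snd (q i))" unfolding q_def snd_conv t'_def by (rule startup_rhs_time_rev(2)[OF t, symmetric])
      finally show "fst (q i) t = shutdown_rhs t (snd (q i))" .
    qed
    show "aff_indep (2 * T - 1) q"
      unfolding q_def using face_family_face(1)[OF t'(1,2) eta_facet]
      by (rule aff_indep_time_rev) (use face PSet_supp in \<open>metis prod.collapse\<close>)
  qed
qed

end

theorem proposition4:
  fixes T L ell :: nat and Cb Cu V Vb eta :: real and alpha beta smax :: nat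
  assumes "T > 0" and "L > 0" and "ell > 0"
    and "Cb > Cu" and "Cu > 0" and "V > 0" and "Vb + V \<le> Cb"
    and "Cu < Vb" and "Vb < Cu + V"
    and "0 \<le> eta" and "eta \<le> min (real L - 1) ((Cb - Vb) / V)"
    and "L \<le> smax" and "int smax \<le> int T - 3" and "int smax \<le> \<lfloor>(Cb - Vb) / V\<rfloor>"
    and "alpha < beta" and "beta \<le> smax"
    and "beta = alpha + 1 \<or> smax \<le> L + alpha"
  defines "Q \<equiv> conv_hull (PSet T L ell Cb Cu V Vb)"
    and "rhs1 \<equiv> \<lambda>t (p :: pt). (Cb - eta * V) * snd p t + eta * V * snd p (t + 1)
            - (\<Sum>s\<in>{0..alpha} \<union> {beta..smax}. (Cb - Vb - real s * V) * (snd p (t - s) - snd p (t - s - 1)))"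
    and "rhs2 \<equiv> \<lambda>t (p :: pt). (Cb - eta * V) * snd p t + eta * V * snd p (t - 1)
            - (\<Sum>s\<in>{0..alpha} \<union> {beta..smax}. (Cb - Vb - real s * V) * (snd p (t + s) - snd p (t + s + 1)))"
  shows "(\<forall>t. smax + 2 \<le> t \<and> t \<le> T - 1 \<longrightarrow> valid_ineq Q (\<lambda>p. fst p t) (rhs1 t))
       \<and> (\<forall>t. 2 \<le> t \<and> int t \<le> int T - int smax - 1 \<longrightarrow> valid_ineq Q (\<lambda>p. fst p t) (rhs2 t))
       \<and> ((eta = 0 \<or> eta = (Cb - Vb) / V \<or> (eta = real L - 1 \<and> L - 1 \<in> {0..alpha} \<union> {beta..smax})) \<longrightarrow>
            (\<forall>t. smax + 2 \<le> t \<and> t \<le> T - 1 \<longrightarrow> facet_ineq Q (\<lambda>p. fst p t) (rhs1 t))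
          \<and> (\<forall>t. 2 \<le> t \<and> int t \<le> int T - int smax - 1 \<longrightarrow> facet_ineq Q (\<lambda>p. fst p t) (rhs2 t)))"
proof -
  interpret strong_ramp_ineqs T L ell Cb Cu V Vb eta alpha beta smax
    by unfold_locales (use assms in auto)
  have rhs: "rhs1 t = (\<lambda>p. startup_rhs t (snd p))" "rhs2 t = (\<lambda>p. shutdown_rhs t (snd p))" for t
    unfolding rhs1_def rhs2_def startup_rhs_def shutdown_rhs_def by simp_all
  have fwd: "smax + 2 \<le> t \<and> t < T" if "smax + 2 \<le> t \<and> t \<le> T - 1" for t
    using that assms(1) by linarith
  have bwd: "2 \<le> t \<and> t + smax < T" if "2 \<le> t \<and> int t \<le> int T - int smax - 1" for t
    using that by linarith
  show ?thesis
    unfolding Q_def rhs using valid_startup_ineq valid_shutdown_ineq facet_startup_ineq facet_shutdown_ineq fwd bwd by blast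
qed

end
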